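(* Let $\mathfrak{g}$ be a $6$-dimensional real nilpotent Lie algebra with first Betti number $b_1=2$ which admits a complex structure. Then $\mathfrak{g}$ is isomorphic to the Lie algebra $(0,0,12,13,23,14+25)$.
   Context: A complex structure on a real Lie algebra $\mathfrak{g}$ is a linear map $J\colon\mathfrak{g}\to\mathfrak{g}$ with $J^2=-1$ and $[JX,JY]=[X,Y]+J[JX,Y]+J[X,JY]$ for all $X,Y\in\mathfrak{g}$. The differential $d\colon\mathfrak{g}^*\to\Lambda^2\mathfrak{g}^*$ is $d\alpha(X,Y)=-\alpha([X,Y])$, and $b_1=\dim\ker(d\colon\mathfrak{g}^*\to\Lambda^2\mathfrak{g}^* )$. Notation for Lie algebras: a $6$-tuple such as $(0,0,12,13,23,14+25)$ denotes the real Lie algebra whose dual has a basis $e^1,\dots,e^6$ with $de^1,\dots,de^6$ given by the successive entries, where $ij$ stands for $e^i\wedge e^j$; thus here $de^1=de^2=0$, $de^3=e^1\wedge e^2$, $de^4=e^1\wedge e^3$, $de^5=e^2\wedge e^3$, $de^6=e^1\wedge e^4+e^2\wedge e^5$. *)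

theory Defs
  imports "HOL-Analysis.Analysis"
begin

definition lie_algebra :: "('a::real_vector \<Rightarrow> 'a \<Rightarrow> 'a) \<Rightarrow> bool" where
  "lie_algebra br \<longleftrightarrow> bilinear br \<and> (\<forall>x. br x x = 0) \<and>
     (\<forall>x y z. br x (br y z) + br y (br z x) + br z (br x y) = 0)"

fun lcs :: "('a::real_vector \<Rightarrow> 'a \<Rightarrow> 'a) \<Rightarrow> nat \<Rightarrow> 'a set" where
  "lcs br 0 = UNIV"
| "lcs br (Suc k) = span {br x y | x y. y \<in> lcs br k}"

definition nilpotent_lie :: "('a::real_vector \<Rightarrow> 'a \<Rightarrow> 'a) \<Rightarrow> bool" where
  "nilpotent_lie br \<longleftrightarrow> (\<exists>k. lcs br k = {0})"

definition complex_structure :: "('a::real_vector \<Rightarrow> 'a \<Rightarrow> 'a) \<Rightarrow> ('a \<Rightarrow> 'a) \<Rightarrow> bool" where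
  "complex_structure br J \<longleftrightarrow> linear J \<and> (\<forall>x. J (J x) = - x) \<and>
     (\<forall>x y. br (J x) (J y) = br x y + J (br (J x) y) + J (br x (J y)))"

text \<open>First Betti number of a Lie algebra on R^n: dimension of the kernel of
d : g* -> Lambda^2 g*, d alpha (X,Y) = - alpha [X,Y].  Linear functionals on
real^'n are identified with vectors a via alpha = (\<lambda>x. a \<bullet> x).\<close>
definition betti1 :: "(real^'n \<Rightarrow> real^'n \<Rightarrow> real^'n) \<Rightarrow> nat" where
  "betti1 br = dim {a::real^'n. \<forall>x y. - (a \<bullet> br x y) = 0}"

definition lie_isomorphic ::
  "('a::real_vector \<Rightarrow> 'a \<Rightarrow> 'a) \<Rightarrow> ('b::real_vector \<Rightarrow> 'b \<Rightarrow> 'b) \<Rightarrow> bool" where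
  "lie_isomorphic br1 br2 \<longleftrightarrow>
     (\<exists>f. linear f \<and> bij f \<and> (\<forall>x y. f (br1 x y) = br2 (f x) (f y)))"

text \<open>The Lie algebra (0,0,12,13,23,14+25) on real^6 with standard basis e_1..e_6
(index 6 of type 6 is written 6).  For x, y, (e^i \<and> e^j)(x,y) = x_i y_j - x_j y_i, and
e^k([x,y]) = - de^k(x,y).\<close>
definition wedge6 :: "real^6 \<Rightarrow> real^6 \<Rightarrow> 6 \<Rightarrow> 6 \<Rightarrow> real" where
  "wedge6 x y i j = x $ i * y $ j - x $ j * y $ i"

definition br_model :: "real^6 \<Rightarrow> real^6 \<Rightarrow> real^6" where
  "br_model x y = (\<chi> k.
     if k = 3 then - wedge6 x y 1 2
     else if k = 4 then - wedge6 x y 1 3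
     else if k = 5 then - wedge6 x y 2 3
     else if k = 6 then - (wedge6 x y 1 4 + wedge6 x y 2 5)
     else 0)"

end

theory Submission
  imports Defs
begin

text \<open>Write \<open>lcs k\<close> for the lower central series, so that \<open>b\<^sub>1 = 2\<close> means
  \<open>dim (lcs 1) = 4\<close>. For a complex structure \<open>J\<close> on a nilpotent Lie algebra, integrability
  forces \<open>lcs 1 + J (lcs 1)\<close> to be proper; here this makes \<open>lcs 1\<close> itself \<open>J\<close>-invariant,
  so the algebra is spanned by \<open>X\<close>, \<open>Y = J X\<close> modulo \<open>lcs 1\<close> for any \<open>X \<notin> lcs 1\<close>.
  Each \<open>lcs (k+1)\<close> is then spanned modulo \<open>lcs (k+2)\<close> by brackets of \<open>X\<close>, \<open>Y\<close> with
  generators of \<open>lcs k\<close>: \<open>Z = [X,Y]\<close>, then \<open>A = [X,Z]\<close>, \<open>B = [Y,Z]\<close>, then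
  \<open>[X,A]\<close>, \<open>[Y,A]\<close>, \<open>[Y,B]\<close>; hence \<open>dim (lcs 2) = 3\<close> and \<open>dim (lcs 3) \<in> {1, 2}\<close>.
  The map \<open>U \<mapsto> [X,U] + J [Y,U]\<close> raises the filtration \<open>lcs k + J (lcs k)\<close> by one step,
  giving \<open>A + J B \<in> lcs 3 + J (lcs 3)\<close> and \<open>[X,A] - [Y,B] + 2 J [Y,A] \<in> lcs 4 + J (lcs 4)\<close>.
  With \<open>dim (lcs 3) = 2\<close> these would make \<open>lcs 3\<close> \<open>J\<close>-invariant and contain \<open>B\<close>
  (after replacing \<open>X\<close> by \<open>J X - k X\<close>), collapsing \<open>lcs 2\<close> onto \<open>lcs 3\<close>. So
  \<open>dim (lcs 3) = 1\<close>, \<open>lcs 4 = 0\<close>, and the relation gives \<open>[Y,A] = 0\<close>,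
  \<open>[Y,B] = [X,A]\<close>: the structure equations of \<open>(0,0,12,13,23,14+25)\<close>.\<close>

lemma dim_insert_le: "dim (insert x (S :: 'a::euclidean_space set)) \<le> dim S + 1"
  by (simp add: dim_insert)

declare lcs.simps(2) [simp del]

lemmas lcs_Suc = lcs.simps(2)

lemma subspace_lcs: "subspace (lcs br k)"
  by (cases k) (simp_all add: lcs_Suc subspace_span)

lemma span_lcs [simp]: "span (lcs br k) = lcs br k"
  by (simp add: span_eq_iff subspace_lcs)

lemma bracket_mem_lcs_Suc: "y \<in> lcs br k \<Longrightarrow> br x y \<in> lcs br (Suc k)"
  unfolding lcs_Suc by (blast intro: span_base)

lemma bracket_mem_lcs_1: "br x y \<in> lcs br 1"
  using bracket_mem_lcs_Suc[of y br 0] by simp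

lemma lcs_Suc_subsetI:
  assumes "subspace S" and "\<And>x y. y \<in> lcs br k \<Longrightarrow> br x y \<in> S"
  shows "lcs br (Suc k) \<subseteq> S"
  unfolding lcs_Suc using assms by (intro span_minimal) auto

lemma lcs_1_subsetI: "subspace S \<Longrightarrow> (\<And>x y. br x y \<in> S) \<Longrightarrow> lcs br 1 \<subseteq> S"
  using lcs_Suc_subsetI[of S br 0] by simp

lemma lcs_Suc_subset: "lcs br (Suc k) \<subseteq> lcs br k"
proof (induction k)
  case (Suc k)
  then show ?case
    by (intro lcs_Suc_subsetI subspace_lcs) (auto intro: bracket_mem_lcs_Suc)
qed simp

lemma lcs_antimono: "m \<le> k \<Longrightarrow> lcs br k \<subseteq> lcs br m"
  by (induction k rule: dec_induct) (use lcs_Suc_subset in blast)+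

lemma lcs_eq_zero_Suc: "lcs br k = {0} \<Longrightarrow> lcs br (Suc k) = {0}"
  using lcs_Suc_subset[of br k] subspace_0[OF subspace_lcs] by blast

lemma lcs_constant_from:
  assumes "lcs br (Suc k) = lcs br k" shows "lcs br (k + m) = lcs br k"
proof (induction m)
  case (Suc m)
  then show ?case using assms by (simp add: lcs_Suc)
qed simp

lemma dim_lcs_Suc_less:
  fixes br :: "'a::euclidean_space \<Rightarrow> 'a \<Rightarrow> 'a"
  assumes "nilpotent_lie br" and "lcs br k \<noteq> {0}"
  shows "dim (lcs br (Suc k)) < dim (lcs br k)"
proof (rule ccontr)
  assume "\<not> ?thesis"
  then have stable: "lcs br (Suc k) = lcs br k"
    using subspace_dim_equal[OF subspace_lcs subspace_lcs lcs_Suc_subset, of br k] by simp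
  obtain K where "lcs br K = {0}"
    using assms(1) unfolding nilpotent_lie_def by blast
  moreover have "lcs br (k + K) \<subseteq> lcs br K"
    by (rule lcs_antimono) simp
  ultimately show False
    using lcs_constant_from[OF stable, of K] assms(2) subspace_0[OF subspace_lcs] by blast
qed

lemma betti1_add_dim_lcs_1:
  fixes br :: "real^'n \<Rightarrow> real^'n \<Rightarrow> real^'n"
  shows "betti1 br + dim (lcs br 1) = CARD('n)"
proof -
  have "{a. \<forall>x y. - (a \<bullet> br x y) = 0} = {a. \<forall>v \<in> lcs br 1. orthogonal v a}"
  proof (intro Collect_cong iffI)
    fix a assume "\<forall>x y. - (a \<bullet> br x y) = 0"
    then have "lcs br 1 \<subseteq> {v. a \<bullet> v = 0}"
      by (intro lcs_1_subsetI subspace_hyperplane) simp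
    then show "\<forall>v \<in> lcs br 1. orthogonal v a"
      by (auto simp: orthogonal_def inner_commute)
  next
    fix a assume "\<forall>v \<in> lcs br 1. orthogonal v a"
    then show "\<forall>x y. - (a \<bullet> br x y) = 0"
      using bracket_mem_lcs_Suc[of _ br 0] by (auto simp: orthogonal_def inner_commute)
  qed
  then show ?thesis
    using dim_subspace_orthogonal_to_vectors[OF subspace_lcs subspace_UNIV, of br 1]
    by (simp add: betti1_def)
qed

lemma lie_isomorphic_if_surjective_hom:
  fixes G :: "'a::euclidean_space \<Rightarrow> 'b::euclidean_space"
  assumes "linear G" and "surj G" and "DIM('a) = DIM('b)"
    and hom: "\<And>u v. G (br1 u v) = br2 (G u) (G v)"
  shows "lie_isomorphic br2 br1"
proof -
  obtain F where F: "linear F" "\<And>x. F (G x) = x" "\<And>x. G (F x) = x"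
    using linear_surjective_isomorphism[OF assms(1,2)] assms(3) by (auto simp: dim_UNIV)
  have "bij F"
    by (rule o_bij[of G]) (auto simp: F)
  moreover have "F (br2 x y) = br1 (F x) (F y)" for x y
    by (metis F(2,3) hom)
  ultimately show ?thesis
    unfolding lie_isomorphic_def using F(1) by blast
qed

locale real_lie_algebra =
  fixes br :: "'a::real_vector \<Rightarrow> 'a \<Rightarrow> 'a"
  assumes lie: "lie_algebra br"
begin

lemma bilinear: "bilinear br"
  using lie by (simp add: lie_algebra_def)

lemma bracket_self [simp]: "br x x = 0"
  using lie by (simp add: lie_algebra_def)

lemma jacobi: "br x (br y z) + br y (br z x) + br z (br x y) = 0"
  using lie by (simp add: lie_algebra_def)

lemmas bracket_simps =
  bilinear_ladd[OF bilinear] bilinear_radd[OF bilinear]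
  bilinear_lmul[OF bilinear] bilinear_rmul[OF bilinear]
  bilinear_lsub[OF bilinear] bilinear_rsub[OF bilinear]
  bilinear_lneg[OF bilinear] bilinear_rneg[OF bilinear]
  bilinear_lzero[OF bilinear] bilinear_rzero[OF bilinear]

lemma bracket_antisym: "br x y = - br y x"
proof -
  have "br x y + br y x = 0"
    using bracket_self[of x] bracket_self[of y] bracket_self[of "x + y"]
    by (simp add: bracket_simps algebra_simps del: bracket_self)
  then show ?thesis by (simp add: add_eq_0_iff)
qed

lemma subspace_bracket_left_vimage: "subspace S \<Longrightarrow> subspace {x. br x y \<in> S}"
  using bilinear by (intro linear_subspace_linear_preimage) (simp_all add: bilinear_def)

lemma subspace_bracket_right_vimage: "subspace S \<Longrightarrow> subspace {y. br x y \<in> S}"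
  using bilinear by (intro linear_subspace_linear_preimage) (simp_all add: bilinear_def)

lemma bracket_mem_lcs_Suc_left: "x \<in> lcs br k \<Longrightarrow> br x y \<in> lcs br (Suc k)"
  using bracket_mem_lcs_Suc[of x br k y] bracket_antisym[of x y]
  by (metis subspace_lcs subspace_neg minus_minus)

lemma bracket_lcs_lcs: "x \<in> lcs br i \<Longrightarrow> y \<in> lcs br j \<Longrightarrow> br x y \<in> lcs br (i + j + 1)"
proof (induction i arbitrary: x y j)
  case 0
  then show ?case by (simp add: bracket_mem_lcs_Suc)
next
  case (Suc i)
  have "x \<in> span {br a b | a b. b \<in> lcs br i}"
    using Suc.prems(1) by (simp add: lcs_Suc)
  then show ?case
  proof (induction rule: span_induct)
    case (step x)
    then obtain a b where x: "x = br a b" and b: "b \<in> lcs br i" by blast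
    have "br x y = br a (br b y) + br b (br y a)"
      using jacobi[of y a b] unfolding x bracket_antisym[of y "br a b"] by (simp add: algebra_simps)
    moreover have "br a (br b y) \<in> lcs br (Suc i + j + 1)"
      using Suc.IH[OF b Suc.prems(2)] by (simp add: bracket_mem_lcs_Suc)
    moreover have "br b (br y a) \<in> lcs br (Suc i + j + 1)"
      using Suc.IH[OF b bracket_mem_lcs_Suc_left[OF Suc.prems(2)]] by simp
    ultimately show ?case
      by (simp add: subspace_add[OF subspace_lcs])
  qed (intro subspace_bracket_left_vimage subspace_lcs)
qed

lemma lcs_Suc_subset_by_generators:
  assumes gen: "span (G \<union> lcs br 1) = UNIV"
    and span_H: "lcs br k \<subseteq> span (H \<union> lcs br (Suc k))"
    and S: "subspace S" "lcs br (Suc (Suc k)) \<subseteq> S"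
    and GH: "\<And>a b. a \<in> G \<Longrightarrow> b \<in> H \<Longrightarrow> br a b \<in> S"
  shows "lcs br (Suc k) \<subseteq> S"
proof (rule lcs_Suc_subsetI[OF S(1)])
  fix x y assume y: "y \<in> lcs br k"
  have "x \<in> span (G \<union> lcs br 1)" using gen by simp
  then show "br x y \<in> S"
  proof (induction rule: span_induct)
    case (step x)
    then show ?case
    proof
      assume "x \<in> G"
      have "y \<in> span (H \<union> lcs br (Suc k))" using span_H y by blast
      then show ?thesis
      proof (induction rule: span_induct)
        case (step y)
        then show ?case
          using GH[OF \<open>x \<in> G\<close>] S(2) bracket_mem_lcs_Suc[of y br "Suc k" x] by auto
      qed (intro subspace_bracket_right_vimage S(1))
    next
      assume "x \<in> lcs br 1"
      then show ?thesis using bracket_lcs_lcs[OF _ y, of x 1] S(2) by auto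
    qed
  qed (intro subspace_bracket_left_vimage S(1))
qed

end

locale linear_complex_structure =
  fixes J :: "'a::euclidean_space \<Rightarrow> 'a"
  assumes linear_J: "linear J" and J_J [simp]: "J (J x) = - x"
begin

lemmas J_simps = linear_add[OF linear_J] linear_scale[OF linear_J] linear_diff[OF linear_J]
  linear_neg[OF linear_J] linear_0[OF linear_J]

lemma J_notin_span_insert:
  assumes V: "subspace V" "J ` V \<subseteq> V" and u: "u \<notin> V"
  shows "J u \<notin> span (insert u V)"
proof
  assume "J u \<in> span (insert u V)"
  moreover have "span V = V"
    using V(1) by (simp add: span_eq_iff)
  ultimately obtain k where w: "J u - k *\<^sub>R u \<in> V"
    by (auto simp: span_breakdown_eq)
  then have "J (J u - k *\<^sub>R u) + k *\<^sub>R (J u - k *\<^sub>R u) \<in> V"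
    using V by (blast intro: subspace_add subspace_scale)
  moreover have "J (J u - k *\<^sub>R u) + k *\<^sub>R (J u - k *\<^sub>R u) = - ((1 + k\<^sup>2) *\<^sub>R u)"
    by (simp add: J_simps algebra_simps power2_eq_square)
  ultimately have "(1 / (1 + k\<^sup>2)) *\<^sub>R ((1 + k\<^sup>2) *\<^sub>R u) \<in> V"
    using V(1) by (metis subspace_neg subspace_scale minus_minus)
  moreover have "1 + k\<^sup>2 \<noteq> 0"
    by (metis power2_less_0 add_eq_0_iff neg_less_0_iff_less zero_less_one)
  ultimately show False using u by simp
qed

lemma dim_insert_J_insert:
  assumes "subspace V" "J ` V \<subseteq> V" and "u \<notin> V"
  shows "dim (insert (J u) (insert u V)) = dim V + 2"
proof -
  have "u \<notin> span V"
    using assms(1,3) span_eq_iff by blast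
  then show ?thesis
    using J_notin_span_insert[OF assms] by (simp add: dim_insert)
qed

lemma dim_J_invariant_psubset:
  assumes "subspace V" "J ` V \<subseteq> V" and "V \<subset> U" "J ` U \<subseteq> U"
  shows "dim V + 2 \<le> dim U"
proof -
  obtain u where "u \<in> U" "u \<notin> V" using assms(3) by blast
  then show ?thesis
    using dim_insert_J_insert[OF assms(1,2)] dim_subset[of "insert (J u) (insert u V)" U] assms
    by auto
qed

definition J_hull :: "'a set \<Rightarrow> 'a set" where
  "J_hull V = {a + J b | a b. a \<in> V \<and> b \<in> V}"

lemma J_hull_eq_sums: "J_hull V = {x + y | x y. x \<in> V \<and> y \<in> J ` V}"
  by (auto simp: J_hull_def)

lemma subspace_J_hull: "subspace V \<Longrightarrow> subspace (J_hull V)"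
  unfolding J_hull_eq_sums by (intro subspace_sums linear_subspace_image[OF linear_J])

lemma subset_J_hull: "subspace V \<Longrightarrow> V \<subseteq> J_hull V"
  unfolding J_hull_def using subspace_0 by (fastforce simp: J_simps intro: exI[of _ 0])

lemma J_mem_J_hull:
  assumes "subspace V" and "x \<in> J_hull V" shows "J x \<in> J_hull V"
proof -
  obtain a b where "x = a + J b" "a \<in> V" "b \<in> V"
    using assms(2) by (auto simp: J_hull_def)
  moreover have "J (a + J b) = - b + J a"
    by (simp add: J_simps)
  ultimately show ?thesis
    unfolding J_hull_def using subspace_neg[OF assms(1)] by blast
qed

lemma J_hull_subset: "subspace U \<Longrightarrow> J ` U \<subseteq> U \<Longrightarrow> V \<subseteq> U \<Longrightarrow> J_hull V \<subseteq> U"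
  unfolding J_hull_def by (blast intro: subspace_add)

lemma J_hull_zero [simp]: "J_hull {0} = {0}"
  by (auto simp: J_hull_def J_simps)

lemma dim_J_hull_le: "subspace V \<Longrightarrow> dim (J_hull V) \<le> 2 * dim V"
  using dim_sums_Int[of V "J ` V"] dim_image_le[OF linear_J, of V]
  by (simp add: J_hull_eq_sums linear_subspace_image[OF linear_J])

end

locale complex_lie_algebra =
  real_lie_algebra br + linear_complex_structure J
  for br :: "'a::euclidean_space \<Rightarrow> 'a \<Rightarrow> 'a" and J :: "'a \<Rightarrow> 'a" +
  assumes integrable: "br (J x) (J y) = br x y + J (br (J x) y) + J (br x (J y))"
begin

lemma bracket_J_hull_lcs:
  assumes "x \<in> J_hull (lcs br k)" "y \<in> J_hull (lcs br k)"
  shows "br x y \<in> J_hull (lcs br (Suc k))"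
proof -
  obtain p q where x: "x = p + J q" and pq: "p \<in> lcs br k" "q \<in> lcs br k"
    using assms(1) by (auto simp: J_hull_def)
  obtain p' q' where y: "y = p' + J q'" and pq': "p' \<in> lcs br k" "q' \<in> lcs br k"
    using assms(2) by (auto simp: J_hull_def)
  have "br x y = (br p p' + br p (J q') + br (J q) p' + br q q') + J (br (J q) q' + br q (J q'))"
    unfolding x y by (simp add: bracket_simps integrable J_simps algebra_simps)
  moreover have "br p p' + br p (J q') + br (J q) p' + br q q' \<in> lcs br (Suc k)"
    "br (J q) q' + br q (J q') \<in> lcs br (Suc k)"
    using pq pq' by (blast intro: subspace_add[OF subspace_lcs] bracket_mem_lcs_Suc
        bracket_mem_lcs_Suc_left)+
  ultimately show ?thesis
    unfolding J_hull_def by blast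
qed

lemma J_hull_lcs_1_neq_UNIV:
  assumes "nilpotent_lie br"
  shows "J_hull (lcs br 1) \<noteq> UNIV"
proof
  assume full: "J_hull (lcs br 1) = UNIV"
  have "J_hull (lcs br (Suc k)) = UNIV" for k
  proof (induction k)
    case (Suc k)
    let ?W = "J_hull (lcs br (Suc (Suc k)))"
    have "lcs br 1 \<subseteq> ?W"
      using bracket_J_hull_lcs[of _ "Suc k"] Suc.IH
      by (intro lcs_1_subsetI subspace_J_hull subspace_lcs) auto
    then have "J_hull (lcs br 1) \<subseteq> ?W"
      by (intro J_hull_subset subspace_J_hull subspace_lcs)
        (auto intro: J_mem_J_hull subspace_lcs)
    then show ?case using full by blast
  qed (use full in simp)
  moreover obtain K where "lcs br K = {0}"
    using assms unfolding nilpotent_lie_def by blast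
  then have "J_hull (lcs br (Suc K)) = {0}"
    by (simp add: lcs_eq_zero_Suc)
  ultimately show False
    using UNIV_not_singleton by metis
qed

lemma bracket_plus_J_bracket_J_mem_J_hull:
  assumes "u \<in> J_hull (lcs br k)"
  shows "br x u + J (br (J x) u) \<in> J_hull (lcs br (Suc k))"
proof -
  obtain p q where u: "u = p + J q" and pq: "p \<in> lcs br k" "q \<in> lcs br k"
    using assms by (auto simp: J_hull_def)
  have "br x u + J (br (J x) u) = (br x p - br (J x) q) + J (br (J x) p + br x q)"
    unfolding u using integrable[of x q] by (simp add: bracket_simps J_simps algebra_simps)
  moreover have "br x p - br (J x) q \<in> lcs br (Suc k)" "br (J x) p + br x q \<in> lcs br (Suc k)"
    using pq by (auto intro!: subspace_diff[OF subspace_lcs] subspace_add[OF subspace_lcs]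
        bracket_mem_lcs_Suc)
  ultimately show ?thesis
    unfolding J_hull_def by blast
qed

end

locale nilpotent_6_b1_2 = complex_lie_algebra +
  assumes nilpotent: "nilpotent_lie br"
    and DIM_6: "DIM('a) = 6"
    and dim_lcs_1: "dim (lcs br 1) = 4"
begin

lemma lcs_1_J_invariant: "J ` lcs br 1 \<subseteq> lcs br 1"
proof -
  have "dim (J_hull (lcs br 1)) + 2 \<le> dim (UNIV :: 'a set)"
    using J_hull_lcs_1_neq_UNIV[OF nilpotent]
    by (intro dim_J_invariant_psubset subspace_J_hull subspace_lcs)
      (auto intro: J_mem_J_hull subspace_lcs)
  then have "lcs br 1 = J_hull (lcs br 1)"
    using dim_lcs_1 DIM_6
    by (intro subspace_dim_equal subspace_lcs subspace_J_hull subset_J_hull) (auto simp: dim_UNIV)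
  then show ?thesis
    using J_mem_J_hull[OF subspace_lcs[of br 1]] by blast
qed

lemma lcs_1_neq_UNIV: "lcs br 1 \<noteq> UNIV"
  using dim_lcs_1 DIM_6 by (auto simp: dim_UNIV)

end

locale nilpotent_6_b1_2_generator = nilpotent_6_b1_2 +
  fixes X :: 'a
  assumes X_notin: "X \<notin> lcs br 1"
begin

abbreviation "Y \<equiv> J X"
abbreviation "Z \<equiv> br X Y"
abbreviation "A \<equiv> br X Z"
abbreviation "B \<equiv> br Y Z"

lemma span_X_Y_lcs_1: "span ({X, Y} \<union> lcs br 1) = UNIV"
proof -
  have "dim (insert Y (insert X (lcs br 1))) = DIM('a)"
    using dim_insert_J_insert[OF subspace_lcs lcs_1_J_invariant X_notin] dim_lcs_1 DIM_6 by simp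
  then show ?thesis
    by (simp add: dim_eq_full insert_commute)
qed

lemma lcs_1_subset_span: "lcs br 1 \<subseteq> span (insert Z (lcs br 2))"
proof -
  have "br a b \<in> span (insert Z (lcs br 2))" if "a \<in> {X, Y}" "b \<in> {X, Y}" for a b
    using that bracket_antisym[of Y X] by (auto intro: span_base span_neg[OF span_base] span_zero)
  moreover have "lcs br 2 \<subseteq> span (insert Z (lcs br 2))"
    by (auto intro: span_base)
  ultimately show ?thesis
    using lcs_Suc_subset_by_generators[where k = 0 and H = "{X, Y}", OF span_X_Y_lcs_1]
      span_X_Y_lcs_1 by (simp add: eval_nat_numeral)
qed

lemma dim_lcs_2: "dim (lcs br 2) = 3"
proof -
  have "dim (lcs br 1) \<le> dim (insert Z (lcs br 2))"
    using dim_subset[OF lcs_1_subset_span] by (simp only: dim_span)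
  then have "3 \<le> dim (lcs br 2)"
    using dim_insert_le[of Z "lcs br 2"] dim_lcs_1 by linarith
  moreover have "lcs br 1 \<noteq> {0}"
    using dim_lcs_1 by (metis dim_singleton zero_neq_numeral)
  then have "dim (lcs br 2) < dim (lcs br 1)"
    using dim_lcs_Suc_less[OF nilpotent, of 1] by (simp add: eval_nat_numeral)
  ultimately show ?thesis
    using dim_lcs_1 by linarith
qed

lemma J_hull_lcs_2: "J_hull (lcs br 2) = lcs br 1"
proof (rule ccontr)
  have sub: "J_hull (lcs br 2) \<subseteq> lcs br 1"
    using lcs_Suc_subset[of br 1]
    by (intro J_hull_subset subspace_lcs lcs_1_J_invariant) (simp add: eval_nat_numeral)
  assume "J_hull (lcs br 2) \<noteq> lcs br 1"
  then have "dim (J_hull (lcs br 2)) + 2 \<le> dim (lcs br 1)"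
    using sub by (intro dim_J_invariant_psubset subspace_J_hull subspace_lcs lcs_1_J_invariant)
      (auto intro: J_mem_J_hull subspace_lcs)
  moreover have "dim (lcs br 2) \<le> dim (J_hull (lcs br 2))"
    by (intro dim_subset subset_J_hull subspace_lcs)
  ultimately show False
    using dim_lcs_1 dim_lcs_2 by simp
qed

lemma lcs_2_subset_span: "lcs br 2 \<subseteq> span (insert A (insert B (lcs br 3)))"
proof -
  have "br a b \<in> span (insert A (insert B (lcs br 3)))" if "a \<in> {X, Y}" "b \<in> {Z}" for a b
    using that by (auto intro: span_base)
  moreover have "lcs br 3 \<subseteq> span (insert A (insert B (lcs br 3)))"
    by (auto intro: span_base)
  ultimately show ?thesis
    using lcs_Suc_subset_by_generators[where k = 1 and H = "{Z}", OF span_X_Y_lcs_1] lcs_1_subset_span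
    by (simp add: eval_nat_numeral)
qed

lemma bracket_X_B: "br X B = br Y A"
  using jacobi[of X Y Z] bracket_antisym[of Z X] by (simp add: bracket_simps)

lemma lcs_3_subset_span:
  "lcs br 3 \<subseteq> span (insert (br X A) (insert (br Y A) (insert (br Y B) (lcs br 4))))"
  (is "_ \<subseteq> span ?S")
proof -
  have "br a b \<in> span ?S" if "a \<in> {X, Y}" "b \<in> {A, B}" for a b
    using that bracket_X_B by (auto intro: span_base)
  moreover have "lcs br 4 \<subseteq> span ?S"
    by (auto intro: span_base)
  ultimately show ?thesis
    using lcs_Suc_subset_by_generators[where k = 2 and H = "{A, B}", OF span_X_Y_lcs_1] lcs_2_subset_span
    by (simp add: eval_nat_numeral)
qed

lemma A_plus_J_B_mem_J_hull_lcs_3: "A + J B \<in> J_hull (lcs br 3)"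
  using bracket_plus_J_bracket_J_mem_J_hull[of Z 2 X] J_hull_lcs_2 bracket_mem_lcs_1[of br X Y] by simp

lemma relation_mem_J_hull_lcs_4: "br X A - br Y B + 2 *\<^sub>R J (br Y A) \<in> J_hull (lcs br 4)"
proof -
  have "br X (A + J B) + J (br Y (A + J B)) = br X A - br Y B + 2 *\<^sub>R J (br Y A)"
    using integrable[of X B] bracket_X_B by (simp add: bracket_simps J_simps algebra_simps scaleR_2)
  then show ?thesis
    using bracket_plus_J_bracket_J_mem_J_hull[OF A_plus_J_B_mem_J_hull_lcs_3, of X] by simp
qed

lemma A_B_mem_lcs_2: "A \<in> lcs br 2" "B \<in> lcs br 2"
  using bracket_mem_lcs_Suc[OF bracket_mem_lcs_1] by (simp_all add: numeral_2_eq_2)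

lemma dim_lcs_3_cases: "dim (lcs br 3) = 1 \<or> dim (lcs br 3) = 2"
proof -
  have "dim (lcs br 2) \<le> dim (insert A (insert B (lcs br 3)))"
    using dim_subset[OF lcs_2_subset_span] by (simp only: dim_span)
  then have "1 \<le> dim (lcs br 3)"
    using dim_insert_le[of A "insert B (lcs br 3)"] dim_insert_le[of B "lcs br 3"] dim_lcs_2 by linarith
  moreover have "lcs br 2 \<noteq> {0}"
    using dim_lcs_2 by (metis dim_singleton zero_neq_numeral)
  then have "dim (lcs br 3) < dim (lcs br 2)"
    using dim_lcs_Suc_less[OF nilpotent, of 2] by (simp add: eval_nat_numeral)
  ultimately show ?thesis
    using dim_lcs_2 by linarith
qed

lemma lcs_3_eq_J_hull_lcs_4:
  assumes A3: "A \<in> lcs br 3" and d3: "dim (lcs br 3) = 2"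
  shows "lcs br 3 = J_hull (lcs br 4)"
proof -
  let ?V = "J_hull (lcs br 4)"
  have V: "subspace ?V" "lcs br 4 \<subseteq> ?V" "\<And>v. v \<in> ?V \<Longrightarrow> J v \<in> ?V"
    by (simp_all add: subspace_J_hull subset_J_hull J_mem_J_hull subspace_lcs)
  have XA: "br X A \<in> ?V" and YA: "br Y A \<in> ?V"
    using V(2) bracket_mem_lcs_Suc[OF A3] by (auto simp: eval_nat_numeral)
  have "br X A + 2 *\<^sub>R J (br Y A) \<in> ?V"
    using XA YA V by (simp add: subspace_add subspace_scale)
  then have "br X A + 2 *\<^sub>R J (br Y A) - (br X A - br Y B + 2 *\<^sub>R J (br Y A)) \<in> ?V"
    using relation_mem_J_hull_lcs_4 by (rule subspace_diff[OF V(1)])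
  then have "insert (br X A) (insert (br Y A) (insert (br Y B) (lcs br 4))) \<subseteq> ?V"
    using XA YA V(2) by simp
  then have sub: "lcs br 3 \<subseteq> ?V"
    using lcs_3_subset_span span_minimal[OF _ V(1)] by blast
  have "lcs br 3 \<noteq> {0}"
    using d3 by (metis dim_singleton zero_neq_numeral)
  then have "dim (lcs br 4) \<le> 1"
    using dim_lcs_Suc_less[OF nilpotent, of 3] d3 by (simp add: eval_nat_numeral)
  then have "dim ?V \<le> dim (lcs br 3)"
    using dim_J_hull_le[OF subspace_lcs, of br 4] d3 by linarith
  then show ?thesis
    by (rule subspace_dim_equal[OF subspace_lcs V(1) sub])
qed

lemma dim_lcs_3_neq_2_if_A_mem:
  assumes A3: "A \<in> lcs br 3" shows "dim (lcs br 3) \<noteq> 2"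
proof
  assume d3: "dim (lcs br 3) = 2"
  then have J3: "J ` lcs br 3 \<subseteq> lcs br 3"
    using lcs_3_eq_J_hull_lcs_4[OF A3] J_mem_J_hull[OF subspace_lcs] by blast
  have "A + J B \<in> lcs br 3"
    using A_plus_J_B_mem_J_hull_lcs_3 J_hull_subset[OF subspace_lcs J3 order_refl] by blast
  then have "J B \<in> lcs br 3"
    using A3 subspace_diff[OF subspace_lcs, of "A + J B" br 3 A] by simp
  then have "B \<in> lcs br 3"
    using J3 subspace_neg[OF subspace_lcs, of "J (J B)" br 3] by auto
  then have "span (insert A (insert B (lcs br 3))) \<subseteq> lcs br 3"
    using A3 by (intro span_minimal subspace_lcs) simp
  then have "dim (lcs br 2) \<le> dim (lcs br 3)"
    using lcs_2_subset_span by (intro dim_subset) blast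
  then show False
    using dim_lcs_2 d3 by simp
qed

text \<open>If \<open>A \<notin> lcs 3\<close>, then \<open>B - k A \<in> lcs 3\<close> for some \<open>k\<close>, and for the generator
  \<open>J X - k X\<close> the element playing the role of \<open>A\<close> is a multiple of \<open>B - k A\<close>.\<close>
lemma dim_lcs_3_neq_2: "dim (lcs br 3) \<noteq> 2"
proof
  assume d3: "dim (lcs br 3) = 2"
  then have "A \<notin> lcs br 3"
    using dim_lcs_3_neq_2_if_A_mem by blast
  then have A: "A \<notin> span (lcs br 3)"
    by simp
  have "insert B (insert A (lcs br 3)) \<subseteq> lcs br 2"
    using A_B_mem_lcs_2 lcs_Suc_subset[of br 2] by (simp add: eval_nat_numeral)
  then have "dim (insert B (insert A (lcs br 3))) \<le> 3"
    using dim_subset dim_lcs_2 by metis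
  then have "B \<in> span (insert A (lcs br 3))"
    using A d3 by (auto simp: dim_insert split: if_splits)
  then obtain k where k: "B - k *\<^sub>R A \<in> lcs br 3"
    by (auto simp: span_breakdown_eq)
  define X' where "X' = Y - k *\<^sub>R X"
  have "X' \<notin> lcs br 1"
  proof
    assume "X' \<in> lcs br 1"
    then have "Y \<in> span (insert X (lcs br 1))"
      unfolding X'_def by (auto simp: span_breakdown_eq)
    then show False
      using J_notin_span_insert[OF subspace_lcs lcs_1_J_invariant X_notin] by blast
  qed
  then interpret X': nilpotent_6_b1_2_generator br J X'
    by unfold_locales
  have "br X' (J X') = (1 + k\<^sup>2) *\<^sub>R Z"
    unfolding X'_def
    by (simp add: J_simps bracket_simps bracket_antisym[of Y X] algebra_simps power2_eq_square)
  then have "br X' (br X' (J X')) = (1 + k\<^sup>2) *\<^sub>R (B - k *\<^sub>R A)"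
    unfolding X'_def by (simp add: bracket_simps algebra_simps)
  then have "br X' (br X' (J X')) \<in> lcs br 3"
    using k by (simp add: subspace_scale[OF subspace_lcs])
  then show False
    using X'.dim_lcs_3_neq_2_if_A_mem d3 by blast
qed

lemma lcs_4_eq_0:
  assumes "dim (lcs br 3) = 1" shows "lcs br 4 = {0}"
proof -
  have "lcs br 3 \<noteq> {0}"
    using assms by (metis dim_singleton zero_neq_one)
  then have "dim (lcs br 4) = 0"
    using dim_lcs_Suc_less[OF nilpotent, of 3] assms by (simp add: eval_nat_numeral)
  then show ?thesis
    using subspace_0[OF subspace_lcs, of br 4] by (auto simp: dim_eq_0)
qed

lemma bracket_lcs_lcs_eq_0:
  assumes "dim (lcs br 3) = 1" and "u \<in> lcs br i" "w \<in> lcs br j" "3 \<le> i + j"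
  shows "br u w = 0"
proof -
  have "br u w \<in> lcs br 4"
    using bracket_lcs_lcs[OF assms(2,3)] lcs_antimono[of 4 "i + j + 1" br] assms(4) by auto
  then show ?thesis
    using lcs_4_eq_0[OF assms(1)] by blast
qed

lemma bracket_Y_A_eq_0:
  assumes "dim (lcs br 3) = 1" shows "br Y A = 0"
proof (rule ccontr)
  assume YA: "br Y A \<noteq> 0"
  have rel: "br X A - br Y B + 2 *\<^sub>R J (br Y A) = 0"
    using relation_mem_J_hull_lcs_4 lcs_4_eq_0[OF assms] by simp
  have mem: "br v A \<in> lcs br 3" "br v B \<in> lcs br 3" for v
    using bracket_mem_lcs_Suc A_B_mem_lcs_2 by (simp_all add: eval_nat_numeral)
  have "2 *\<^sub>R J (br Y A) = br Y B - br X A"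
    using rel by (simp add: algebra_simps)
  then have "J (br Y A) = (1 / 2) *\<^sub>R (br Y B - br X A)"
    by (metis scaleR_scaleR nonzero_divide_eq_eq scaleR_one zero_neq_numeral)
  also have "\<dots> \<in> lcs br 3"
    using mem by (intro subspace_scale[OF subspace_lcs] subspace_diff[OF subspace_lcs])
  finally have "insert (J (br Y A)) (insert (br Y A) {0}) \<subseteq> lcs br 3"
    using mem subspace_0[OF subspace_lcs] by simp
  then have "dim (insert (J (br Y A)) (insert (br Y A) {0})) \<le> 1"
    using dim_subset assms by metis
  moreover have "dim (insert (J (br Y A)) (insert (br Y A) {0})) = 2"
    using dim_insert_J_insert[of "{0}"] YA by (simp add: subspace_0 J_simps)
  ultimately show False by simp
qed

lemma bracket_Y_B_eq:
  assumes "dim (lcs br 3) = 1" shows "br Y B = br X A"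
  using relation_mem_J_hull_lcs_4 lcs_4_eq_0[OF assms] bracket_Y_A_eq_0[OF assms]
  by (simp add: J_simps)

lemma span_adapted_basis:
  assumes "dim (lcs br 3) = 1"
  shows "span {X, Y, Z, A, B, br X A} = UNIV"
proof -
  let ?T = "span {X, Y, Z, A, B, br X A}"
  have "lcs br 3 \<subseteq> span {br X A}"
    using lcs_3_subset_span bracket_Y_A_eq_0[OF assms] bracket_Y_B_eq[OF assms] lcs_4_eq_0[OF assms]
    by (simp add: insert_commute)
  also have "\<dots> \<subseteq> ?T"
    by (intro span_mono) auto
  finally have "insert A (insert B (lcs br 3)) \<subseteq> ?T"
    by (auto intro: span_base)
  then have "insert Z (lcs br 2) \<subseteq> ?T"
    using lcs_2_subset_span span_minimal[OF _ subspace_span] by (blast intro: span_base)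
  then have "{X, Y} \<union> lcs br 1 \<subseteq> ?T"
    using lcs_1_subset_span span_minimal[OF _ subspace_span] by (blast intro: span_base)
  then show ?thesis
    using span_X_Y_lcs_1 span_minimal[OF _ subspace_span] by blast
qed

text \<open>The basis \<open>X, Y, -Z, A, B, -[X, A]\<close> realises the structure constants of the model.\<close>
lemma lie_isomorphic_br_model_if_dim_lcs_3:
  assumes "dim (lcs br 3) = 1"
  shows "lie_isomorphic br br_model"
proof -
  define C where "C = br X A"
  define G where "G v = v$1 *\<^sub>R X + v$2 *\<^sub>R Y - v$3 *\<^sub>R Z + v$4 *\<^sub>R A + v$5 *\<^sub>R B - v$6 *\<^sub>R C"
    for v :: "real^6"
  have "linear G"
    by (rule linearI) (simp_all add: G_def algebra_simps)
  have "{X, Y, Z, A, B, C} \<subseteq> range G"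
  proof -
    have "G (axis 1 1) = X" "G (axis 2 1) = Y" "G (axis 3 (-1)) = Z" "G (axis 4 1) = A"
      "G (axis 5 1) = B" "G (axis 6 (-1)) = C"
      by (simp_all add: G_def axis_def)
    then show ?thesis by (metis empty_subsetI insert_subset rangeI)
  qed
  then have "span {X, Y, Z, A, B, C} \<subseteq> range G"
    by (rule span_minimal[OF _ linear_subspace_image[OF \<open>linear G\<close> subspace_UNIV]])
  then have "surj G"
    using span_adapted_basis[OF assms] unfolding C_def by auto
  have C3: "C \<in> lcs br 3"
    unfolding C_def using bracket_mem_lcs_Suc[OF A_B_mem_lcs_2(1)] by simp
  have central: "br v C = 0" "br C v = 0" for v
    using bracket_lcs_lcs_eq_0[OF assms _ C3, of v 0] bracket_lcs_lcs_eq_0[OF assms C3, of v 0]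
    by simp_all
  have Z_A: "br Z A = 0" and Z_B: "br Z B = 0" and A_B: "br A B = 0"
    using bracket_lcs_lcs_eq_0[OF assms bracket_mem_lcs_1 A_B_mem_lcs_2(1)]
      bracket_lcs_lcs_eq_0[OF assms bracket_mem_lcs_1 A_B_mem_lcs_2(2)]
      bracket_lcs_lcs_eq_0[OF assms A_B_mem_lcs_2] by simp_all
  have Y_A: "br Y A = 0" and X_B: "br X B = 0" and Y_B: "br Y B = C"
    using bracket_Y_A_eq_0[OF assms] bracket_Y_B_eq[OF assms] bracket_X_B
    by (simp_all add: C_def)
  have "G (br_model u v) = br (G u) (G v)" for u v
  proof -
    have "br (G u) (G v) = (u$1 * v$2 - u$2 * v$1) *\<^sub>R Z - (u$1 * v$3 - u$3 * v$1) *\<^sub>R A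
        - (u$2 * v$3 - u$3 * v$2) *\<^sub>R B + ((u$1 * v$4 - u$4 * v$1) + (u$2 * v$5 - u$5 * v$2)) *\<^sub>R C"
      unfolding G_def
      by (simp add: bracket_simps central Z_A Z_B A_B Y_A X_B Y_B C_def[symmetric]
          bracket_antisym[of Y X] bracket_antisym[of Z X] bracket_antisym[of Z Y]
          bracket_antisym[of A X] bracket_antisym[of A Y] bracket_antisym[of A Z]
          bracket_antisym[of B X] bracket_antisym[of B Y] bracket_antisym[of B Z]
          bracket_antisym[of B A] algebra_simps)
    also have "\<dots> = G (br_model u v)"
      unfolding G_def by (simp add: br_model_def wedge6_def algebra_simps)
    finally show ?thesis ..
  qed
  then show ?thesis
    using lie_isomorphic_if_surjective_hom[OF \<open>linear G\<close> \<open>surj G\<close>] DIM_6 by simp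
qed

end

lemma (in nilpotent_6_b1_2) lie_isomorphic_br_model: "lie_isomorphic br br_model"
proof -
  obtain X where "X \<notin> lcs br 1"
    using lcs_1_neq_UNIV by blast
  then interpret nilpotent_6_b1_2_generator br J X
    by unfold_locales
  show ?thesis
    using dim_lcs_3_cases dim_lcs_3_neq_2 lie_isomorphic_br_model_if_dim_lcs_3 by blast
qed

theorem theorem3p1:
  fixes br :: "real^6 \<Rightarrow> real^6 \<Rightarrow> real^6"
  assumes "lie_algebra br"
    and "nilpotent_lie br"
    and "betti1 br = 2"
    and "\<exists>J. complex_structure br J"
  shows "lie_isomorphic br br_model"
proof -
  obtain J where J: "complex_structure br J"
    using assms(4) by blast
  have "dim (lcs br 1) = 4"
    using betti1_add_dim_lcs_1[of br] assms(3) by simp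
  then interpret nilpotent_6_b1_2 br J
    using assms(1,2) J by unfold_locales (auto simp: complex_structure_def linear_add linear_scale)
  show ?thesis
    by (rule lie_isomorphic_br_model)
qed

end
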